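(* Let $R$ be a ring. (i) For any nil ideal $I$ of $R$, $R$ is GSWNC if and only if $R/I$ is GSWNC. (ii) $R$ is GSWNC if and only if the Jacobson radical $J(R)$ is nil and $R/J(R)$ is GSWNC.
   Context: All rings are associative with identity. An element $a$ of a ring is strongly weakly nil-clean if there exist an idempotent $e$ and a nilpotent $q$ with $eq = qe$ such that $a = q + e$ or $a = q - e$. A ring is GSWNC if every non-invertible element is strongly weakly nil-clean. *)

theory Defs
  imports "HOL-Algebra.Algebra"
begin

definition nilpotent_elem :: "('a, 'b) ring_scheme \<Rightarrow> 'a \<Rightarrow> bool" where
  "nilpotent_elem R q \<longleftrightarrow> q \<in> carrier R \<and> (\<exists>n::nat. q [^]\<^bsub>R\<^esub> n = \<zero>\<^bsub>R\<^esub>)"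

definition idempotent_elem :: "('a, 'b) ring_scheme \<Rightarrow> 'a \<Rightarrow> bool" where
  "idempotent_elem R e \<longleftrightarrow> e \<in> carrier R \<and> e \<otimes>\<^bsub>R\<^esub> e = e"

definition strongly_weakly_nil_clean :: "('a, 'b) ring_scheme \<Rightarrow> 'a \<Rightarrow> bool" where
  "strongly_weakly_nil_clean R a \<longleftrightarrow>
     (\<exists>e q. idempotent_elem R e \<and> nilpotent_elem R q \<and> e \<otimes>\<^bsub>R\<^esub> q = q \<otimes>\<^bsub>R\<^esub> e \<and>
        (a = q \<oplus>\<^bsub>R\<^esub> e \<or> a = q \<ominus>\<^bsub>R\<^esub> e))"

definition GSWNC :: "('a, 'b) ring_scheme \<Rightarrow> bool" where
  "GSWNC R \<longleftrightarrow> (\<forall>a \<in> carrier R - Units R. strongly_weakly_nil_clean R a)"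

definition nil_set :: "('a, 'b) ring_scheme \<Rightarrow> 'a set \<Rightarrow> bool" where
  "nil_set R I \<longleftrightarrow> (\<forall>x \<in> I. nilpotent_elem R x)"

definition nil_ideal :: "'a set \<Rightarrow> ('a, 'b) ring_scheme \<Rightarrow> bool" where
  "nil_ideal I R \<longleftrightarrow> ideal I R \<and> nil_set R I"

definition left_ideal :: "'a set \<Rightarrow> ('a, 'b) ring_scheme \<Rightarrow> bool" where
  "left_ideal L R \<longleftrightarrow> additive_subgroup L R \<and>
     (\<forall>r \<in> carrier R. \<forall>x \<in> L. r \<otimes>\<^bsub>R\<^esub> x \<in> L)"

definition maximal_left_ideal :: "'a set \<Rightarrow> ('a, 'b) ring_scheme \<Rightarrow> bool" where
  "maximal_left_ideal M R \<longleftrightarrow> left_ideal M R \<and> M \<noteq> carrier R \<and>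
     (\<forall>L. left_ideal L R \<longrightarrow> M \<subseteq> L \<longrightarrow> L = M \<or> L = carrier R)"

text \<open>Jacobson radical: intersection of all maximal left ideals (equal to the whole
  (zero) ring when there are none).\<close>
definition jacobson_radical :: "('a, 'b) ring_scheme \<Rightarrow> 'a set" where
  "jacobson_radical R = {x \<in> carrier R. \<forall>M. maximal_left_ideal M R \<longrightarrow> x \<in> M}"

end

theory Submission
  imports Defs
begin

text \<open>
  An element a is strongly weakly nil-clean iff a - a^2 or a + a^2 is nilpotent. For sufficiency one may work in a commutative subring containing a
  (its double centralizer); there a Bezout identity s a^(n+1) + t (1 - a)^(n+1) = 1
  yields the idempotent e = s a^(n+1), and a - e is a multiple of a - a^2.

  A surjective ring homomorphism with nil kernel reflects nilpotency and, since 1 minus a nilpotent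
  is a unit, also invertibility; so it reflects this criterion and hence the GSWNC property, which
  gives (i). For (ii), the Jacobson radical J is a two-sided ideal, and in a GSWNC ring every
  x in J is nilpotent: either x is a unit, which forces R = 0, or x - x^2 = (1 - x) x or
  x + x^2 = (1 + x) x is nilpotent, where 1 - x resp. 1 + x is left invertible and commutes with x.
\<close>

definition centralizer :: "('a, 'b) ring_scheme \<Rightarrow> 'a set \<Rightarrow> 'a set" where
  "centralizer R S = {x \<in> carrier R. \<forall>y \<in> S. x \<otimes>\<^bsub>R\<^esub> y = y \<otimes>\<^bsub>R\<^esub> x}"

context ring begin

lemma subring_centralizer:
  assumes S: "S \<subseteq> carrier R" shows "subring (centralizer R S) R"
proof (rule subringI)
  show "centralizer R S \<subseteq> carrier R" "\<one> \<in> centralizer R S"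
    using S by (auto simp: centralizer_def)
  fix x y assume x: "x \<in> centralizer R S" and y: "y \<in> centralizer R S"
  have c: "x \<in> carrier R" "y \<in> carrier R" using x y by (simp_all add: centralizer_def)
  show "\<ominus> x \<in> centralizer R S"
    using x S unfolding centralizer_def by (auto simp: l_minus r_minus subset_iff)
  show "x \<otimes> y \<in> centralizer R S"
    unfolding centralizer_def
  proof (intro CollectI conjI ballI)
    fix z assume z: "z \<in> S"
    have zc: "z \<in> carrier R" using z S by blast
    have "x \<otimes> y \<otimes> z = x \<otimes> (z \<otimes> y)" using y z c zc by (simp add: m_assoc centralizer_def)
    also have "\<dots> = z \<otimes> x \<otimes> y" using x z c zc by (simp flip: m_assoc add: centralizer_def)
    finally show "x \<otimes> y \<otimes> z = z \<otimes> (x \<otimes> y)" using c zc by (simp add: m_assoc)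
  qed (use c in simp)
  show "x \<oplus> y \<in> centralizer R S"
    using x y S unfolding centralizer_def by (auto simp: l_distr r_distr subset_iff)
qed

lemma subcring_centralizer_centralizer:
  assumes S: "S \<subseteq> carrier R" and comm: "\<And>x y. x \<in> S \<Longrightarrow> y \<in> S \<Longrightarrow> x \<otimes> y = y \<otimes> x"
  shows "subcring (centralizer R (centralizer R S)) R"
proof (rule subcringI)
  have "centralizer R S \<subseteq> carrier R" by (simp add: centralizer_def)
  then show "subring (centralizer R (centralizer R S)) R" by (rule subring_centralizer)
  have "S \<subseteq> centralizer R S" using S comm by (auto simp: centralizer_def)
  then have "centralizer R (centralizer R S) \<subseteq> centralizer R S"
    by (auto simp: centralizer_def)
  then show "x \<otimes> y = y \<otimes> x"
    if "x \<in> centralizer R (centralizer R S)" "y \<in> centralizer R (centralizer R S)" for x y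
    using that by (auto simp: centralizer_def)
qed

lemma subset_centralizer_centralizer:
  "S \<subseteq> carrier R \<Longrightarrow> S \<subseteq> centralizer R (centralizer R S)"
  by (auto simp: centralizer_def)

lemma a_minus_consistent:
  assumes H: "subring H R" and x: "x \<in> H" and y: "y \<in> H"
  shows "x \<ominus>\<^bsub>R\<lparr>carrier := H\<rparr>\<^esub> y = x \<ominus> y"
proof -
  interpret S: ring "R\<lparr>carrier := H\<rparr>" using H by (rule subring_is_ring)
  have "H \<subseteq> carrier R" using H by (rule subringE)
  then have "\<ominus> y = \<ominus>\<^bsub>R\<lparr>carrier := H\<rparr>\<^esub> y"
    using S.l_neg[of y] S.a_inv_closed[of y] y by (intro minus_equality) auto
  then show ?thesis by (simp add: a_minus_def)
qed

lemma nilpotent_elem_mult: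
  assumes x: "nilpotent_elem R x" and y: "y \<in> carrier R" and xy: "x \<otimes> y = y \<otimes> x"
  shows "nilpotent_elem R (x \<otimes> y)"
proof -
  obtain n where "x \<in> carrier R" "x [^] (n::nat) = \<zero>" using x by (auto simp: nilpotent_elem_def)
  then have "x \<otimes> y \<in> carrier R" "(x \<otimes> y) [^] n = \<zero>" using y xy by (simp_all add: pow_mult_distrib)
  then show ?thesis by (auto simp: nilpotent_elem_def)
qed

lemma nilpotent_elem_uminus_iff:
  assumes x: "x \<in> carrier R" shows "nilpotent_elem R (\<ominus> x) \<longleftrightarrow> nilpotent_elem R x"
proof -
  have "nilpotent_elem R (\<ominus> y)" if "nilpotent_elem R y" for y
  proof -
    have y: "y \<in> carrier R" using that by (simp add: nilpotent_elem_def)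
    have "y \<otimes> \<ominus> \<one> = \<ominus> \<one> \<otimes> y" using y by (simp add: l_minus r_minus)
    then have "nilpotent_elem R (y \<otimes> \<ominus> \<one>)" using nilpotent_elem_mult[OF that] by simp
    moreover have "y \<otimes> \<ominus> \<one> = \<ominus> y" using y by (simp add: r_minus)
    ultimately show ?thesis by metis
  qed
  from this[of x] this[of "\<ominus> x"] show ?thesis using x by auto
qed

lemma one_minus_nilpotent_Units:
  assumes "nilpotent_elem R x" shows "\<one> \<ominus> x \<in> Units R"
proof -
  obtain n where x: "x \<in> carrier R" and n: "x [^] (n::nat) = \<zero>"
    using assms by (auto simp: nilpotent_elem_def)
  \<comment> \<open>g is the partial geometric sum 1 + x + ... + x^(k-1).\<close>
  have "\<exists>g \<in> carrier R. (\<one> \<ominus> x) \<otimes> g = \<one> \<ominus> x [^] k \<and> g \<otimes> (\<one> \<ominus> x) = \<one> \<ominus> x [^] k"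
    for k :: nat
  proof (induction k)
    case 0
    show ?case using x by (intro bexI[of _ \<zero>]) (auto simp: minus_eq r_neg)
  next
    case (Suc k)
    then obtain g where g: "g \<in> carrier R" "(\<one> \<ominus> x) \<otimes> g = \<one> \<ominus> x [^] k"
      "g \<otimes> (\<one> \<ominus> x) = \<one> \<ominus> x [^] k" by blast
    have step: "\<one> \<ominus> x \<oplus> x \<otimes> (\<one> \<ominus> x [^] k) = \<one> \<ominus> x [^] Suc k"
      using x nat_pow_closed[OF x, of k] unfolding nat_pow_Suc2[OF x]
      by (simp add: minus_eq r_distr r_minus a_assoc r_neg1)
    have "(\<one> \<ominus> x) \<otimes> (\<one> \<oplus> x \<otimes> g) = \<one> \<ominus> x \<oplus> x \<otimes> ((\<one> \<ominus> x) \<otimes> g)"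
      and "(\<one> \<oplus> x \<otimes> g) \<otimes> (\<one> \<ominus> x) = \<one> \<ominus> x \<oplus> x \<otimes> (g \<otimes> (\<one> \<ominus> x))"
      using x g(1) by (simp_all add: ring_simprules)
    then have "(\<one> \<ominus> x) \<otimes> (\<one> \<oplus> x \<otimes> g) = \<one> \<ominus> x [^] Suc k"
      and "(\<one> \<oplus> x \<otimes> g) \<otimes> (\<one> \<ominus> x) = \<one> \<ominus> x [^] Suc k"
      by (simp_all only: g(2,3) step)
    then show ?case using x g(1) by (intro bexI[of _ "\<one> \<oplus> x \<otimes> g"]) auto
  qed
  from this[of n] obtain g where "g \<in> carrier R" "(\<one> \<ominus> x) \<otimes> g = \<one>" "g \<otimes> (\<one> \<ominus> x) = \<one>"
    unfolding n by (auto simp: minus_eq)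
  then show ?thesis using x unfolding Units_def by auto
qed

lemma nilpotent_elem_if_left_invertible_factor:
  assumes x: "x \<in> carrier R" and w: "w \<in> carrier R" and u: "u \<in> carrier R" "u \<otimes> w = \<one>"
    and wx: "w \<otimes> x = x \<otimes> w" and nil: "nilpotent_elem R (w \<otimes> x)"
  shows "nilpotent_elem R x"
proof -
  obtain n where n: "(w \<otimes> x) [^] (n::nat) = \<zero>" using nil by (auto simp: nilpotent_elem_def)
  have uw_pow: "u [^] k \<otimes> w [^] k = \<one>" for k :: nat
  proof (induction k)
    case (Suc k)
    have "w [^] Suc k = w \<otimes> w [^] k" using w by (simp only: nat_pow_Suc2)
    then have "u [^] Suc k \<otimes> w [^] Suc k = u [^] k \<otimes> (u \<otimes> w) \<otimes> w [^] k"
      using u(1) w by (simp add: m_assoc)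
    then show ?case using Suc u w by simp
  qed simp
  have "x [^] n = (u [^] n \<otimes> w [^] n) \<otimes> x [^] n" using uw_pow x by simp
  also have "\<dots> = u [^] n \<otimes> (w \<otimes> x) [^] n" using u w x by (simp add: m_assoc pow_mult_distrib[OF wx w x])
  also have "\<dots> = \<zero>" using n u by simp
  finally show ?thesis using x by (auto simp: nilpotent_elem_def)
qed

end

section \<open>Strongly nil-clean elements\<close>

definition strongly_nil_clean :: "('a, 'b) ring_scheme \<Rightarrow> 'a \<Rightarrow> bool" where
  "strongly_nil_clean R a \<longleftrightarrow>
     (\<exists>e q. idempotent_elem R e \<and> nilpotent_elem R q \<and> e \<otimes>\<^bsub>R\<^esub> q = q \<otimes>\<^bsub>R\<^esub> e \<and> a = q \<oplus>\<^bsub>R\<^esub> e)"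

lemma (in cring) bezout_powers:
  assumes x: "x \<in> carrier R" and y: "y \<in> carrier R"
    and uv: "u \<in> carrier R" "v \<in> carrier R" "u \<otimes> x \<oplus> v \<otimes> y = \<one>"
  shows "\<exists>s \<in> carrier R. \<exists>t \<in> carrier R. s \<otimes> x [^] (m::nat) \<oplus> t \<otimes> y [^] (n::nat) = \<one>"
proof -
  have power_right: "\<exists>u' \<in> carrier R. \<exists>v' \<in> carrier R. u' \<otimes> x \<oplus> v' \<otimes> y [^] (k::nat) = \<one>"
    if "x \<in> carrier R" "y \<in> carrier R" "u \<in> carrier R" "v \<in> carrier R"
      "u \<otimes> x \<oplus> v \<otimes> y = \<one>" for x y u v k
  proof (induction k)
    case 0
    show ?case using that by (intro bexI[of _ \<zero>] bexI[of _ \<one>]) auto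
  next
    case (Suc k)
    then obtain u' v' where uv': "u' \<in> carrier R" "v' \<in> carrier R" "u' \<otimes> x \<oplus> v' \<otimes> y [^] k = \<one>"
      by blast
    have "(u' \<oplus> v' \<otimes> y [^] k \<otimes> u) \<otimes> x \<oplus> (v' \<otimes> v) \<otimes> y [^] Suc k
        = u' \<otimes> x \<oplus> v' \<otimes> y [^] k \<otimes> (u \<otimes> x \<oplus> v \<otimes> y)"
      unfolding nat_pow_Suc using that(1-4) uv'(1,2) nat_pow_closed[of y k] by algebra
    also have "\<dots> = \<one>" using that uv' by simp
    finally show ?case using that uv' by blast
  qed
  obtain u' v' where uv': "u' \<in> carrier R" "v' \<in> carrier R" "u' \<otimes> x \<oplus> v' \<otimes> y [^] n = \<one>"
    using power_right[OF x y uv] by blast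
  then have "v' \<otimes> y [^] n \<oplus> u' \<otimes> x = \<one>" using x y by (simp add: a_comm)
  then obtain t s where "t \<in> carrier R" "s \<in> carrier R" "t \<otimes> y [^] n \<oplus> s \<otimes> x [^] m = \<one>"
    using power_right[of "y [^] n" x v' u' m] x y uv' by blast
  then show ?thesis using x y by (metis a_comm m_closed nat_pow_closed)
qed

lemma (in cring) lift_idempotent:
  assumes a: "a \<in> carrier R" and nil: "nilpotent_elem R (a \<ominus> a \<otimes> a)"
  shows "\<exists>e. idempotent_elem R e \<and> nilpotent_elem R (a \<ominus> e)"
proof -
  obtain n where n: "(a \<ominus> a \<otimes> a) [^] (n::nat) = \<zero>"
    using nil by (auto simp: nilpotent_elem_def)
  have b: "\<one> \<ominus> a \<in> carrier R" using a by simp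
  have "\<one> \<otimes> a \<oplus> \<one> \<otimes> (\<one> \<ominus> a) = \<one>" using a by algebra
  then obtain s t where st: "s \<in> carrier R" "t \<in> carrier R"
    "s \<otimes> a [^] Suc n \<oplus> t \<otimes> (\<one> \<ominus> a) [^] Suc n = \<one>"
    using bezout_powers[OF a b] by blast
  define A where "A = a [^] n"
  define B where "B = (\<one> \<ominus> a) [^] n"
  have AB: "A \<in> carrier R" "B \<in> carrier R" "A \<otimes> B = \<zero>"
    unfolding A_def B_def using a b n by (simp_all flip: nat_pow_distrib) algebra
  define e where "e = s \<otimes> A \<otimes> a"
  define f where "f = t \<otimes> B \<otimes> (\<one> \<ominus> a)"
  have ef: "e \<in> carrier R" "f \<in> carrier R" unfolding e_def f_def using a b st AB by simp_all
  have sum: "e \<oplus> f = \<one>" using st a b unfolding e_def f_def A_def B_def by (simp add: m_assoc)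
  have "e \<otimes> f = s \<otimes> t \<otimes> (A \<otimes> B) \<otimes> (a \<otimes> (\<one> \<ominus> a))"
    unfolding e_def f_def using a b st(1,2) AB(1,2) by algebra
  then have ef_zero: "e \<otimes> f = \<zero>" using AB a b st by simp
  have "e \<otimes> e = e \<otimes> (e \<oplus> f) \<ominus> e \<otimes> f" using ef by algebra
  then have "e \<otimes> e = e" using ef sum ef_zero by (simp add: minus_eq)
  then have idem: "idempotent_elem R e" using ef by (simp add: idempotent_elem_def)
  define c where "c = t \<otimes> B \<ominus> s \<otimes> A"
  have "a \<ominus> e = a \<otimes> (e \<oplus> f) \<ominus> e" using sum a by simp
  also have "\<dots> = (a \<ominus> a \<otimes> a) \<otimes> c"
    unfolding e_def f_def c_def using a st(1,2) AB(1,2) by algebra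
  finally have "(a \<ominus> e) [^] n = (a \<ominus> a \<otimes> a) [^] n \<otimes> c [^] n"
    unfolding c_def using a st(1,2) AB(1,2) by (simp add: nat_pow_distrib)
  then have "nilpotent_elem R (a \<ominus> e)"
    unfolding c_def using n a ef st(1,2) AB(1,2) by (auto simp: nilpotent_elem_def)
  then show ?thesis using idem by blast
qed

context ring begin

lemma nilpotent_elem_if_strongly_nil_clean:
  assumes a: "a \<in> carrier R" and "strongly_nil_clean R a"
  shows "nilpotent_elem R (a \<ominus> a \<otimes> a)"
proof -
  obtain e q where e: "e \<in> carrier R" "e \<otimes> e = e" and q: "nilpotent_elem R q" "q \<in> carrier R"
    and eq: "e \<otimes> q = q \<otimes> e" and a_eq: "a = q \<oplus> e"
    using assms(2) by (auto simp: strongly_nil_clean_def idempotent_elem_def nilpotent_elem_def)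
  define c where "c = \<one> \<ominus> q \<ominus> e \<ominus> e"
  have "a \<ominus> a \<otimes> a = q \<otimes> c"
    unfolding a_eq c_def using e q(2) eq by (algebra, simp)
  moreover have "c \<otimes> q = q \<otimes> c"
  proof -
    have sub: "subring (centralizer R {q}) R" using q(2) by (simp add: subring_centralizer)
    have "q \<in> centralizer R {q}" "e \<in> centralizer R {q}" using e q(2) eq by (auto simp: centralizer_def)
    then have "c \<in> centralizer R {q}" unfolding c_def a_minus_def using subringE(3,5,7)[OF sub] by simp
    then show ?thesis by (simp add: centralizer_def)
  qed
  moreover have "c \<in> carrier R" unfolding c_def using e q(2) by simp
  ultimately show ?thesis using q(1) by (metis nilpotent_elem_mult)
qed

lemma strongly_nil_clean_if_nilpotent:
  assumes a: "a \<in> carrier R" and nil: "nilpotent_elem R (a \<ominus> a \<otimes> a)"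
  shows "strongly_nil_clean R a"
proof -
  define H where "H = centralizer R (centralizer R {a})"
  have "subcring H R" unfolding H_def using a by (intro subcring_centralizer_centralizer) auto
  then have sub: "subring H R" and comm: "cring (R\<lparr>carrier := H\<rparr>)"
    using subcring_iff[OF subringE(1)] by (auto simp: subcring_def)
  interpret S: cring "R\<lparr>carrier := H\<rparr>" by (rule comm)
  have H: "H \<subseteq> carrier R" using sub by (rule subringE)
  have aH: "a \<in> H" unfolding H_def using a subset_centralizer_centralizer[of "{a}"] by blast
  have "a \<ominus>\<^bsub>R\<lparr>carrier := H\<rparr>\<^esub> a \<otimes> a = a \<ominus> a \<otimes> a"
    using aH sub by (simp add: a_minus_consistent subringE(6))
  moreover have "a \<ominus>\<^bsub>R\<lparr>carrier := H\<rparr>\<^esub> a \<otimes> a \<in> H"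
    using aH S.minus_closed S.m_closed by simp
  ultimately have "nilpotent_elem (R\<lparr>carrier := H\<rparr>) (a \<ominus>\<^bsub>R\<lparr>carrier := H\<rparr>\<^esub> a \<otimes> a)"
    using nil aH sub by (auto simp: nilpotent_elem_def nat_pow_consistent[symmetric] subringE)
  then obtain e where e: "idempotent_elem (R\<lparr>carrier := H\<rparr>) e"
    and q: "nilpotent_elem (R\<lparr>carrier := H\<rparr>) (a \<ominus>\<^bsub>R\<lparr>carrier := H\<rparr>\<^esub> e)"
    using S.lift_idempotent aH by auto
  have eH: "e \<in> H" using e by (simp add: idempotent_elem_def)
  have ec: "e \<in> carrier R" using eH H by blast
  have q': "a \<ominus>\<^bsub>R\<lparr>carrier := H\<rparr>\<^esub> e = a \<ominus> e" using sub aH eH by (rule a_minus_consistent)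
  have "idempotent_elem R e" using e ec by (simp add: idempotent_elem_def)
  moreover have "nilpotent_elem R (a \<ominus> e)"
    using q H unfolding q' by (auto simp: nilpotent_elem_def nat_pow_consistent[symmetric])
  moreover have "e \<otimes> (a \<ominus> e) = (a \<ominus> e) \<otimes> e"
    using S.m_comm[of e "a \<ominus> e"] eH q unfolding q' by (simp add: nilpotent_elem_def)
  moreover have "a = (a \<ominus> e) \<oplus> e" using a ec by algebra
  ultimately show ?thesis unfolding strongly_nil_clean_def by blast
qed

lemma strongly_nil_clean_iff:
  "a \<in> carrier R \<Longrightarrow> strongly_nil_clean R a \<longleftrightarrow> nilpotent_elem R (a \<ominus> a \<otimes> a)"
  using nilpotent_elem_if_strongly_nil_clean strongly_nil_clean_if_nilpotent by blast

lemma strongly_weakly_nil_clean_iff_strongly_nil_clean: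
  assumes a: "a \<in> carrier R"
  shows "strongly_weakly_nil_clean R a \<longleftrightarrow> strongly_nil_clean R a \<or> strongly_nil_clean R (\<ominus> a)"
proof -
  have "(\<exists>e q. idempotent_elem R e \<and> nilpotent_elem R q \<and> e \<otimes> q = q \<otimes> e \<and> a = q \<ominus> e)
      \<longleftrightarrow> strongly_nil_clean R (\<ominus> a)" (is "?minus \<longleftrightarrow> _")
  proof
    assume ?minus
    then obtain e q where e: "idempotent_elem R e" and q: "nilpotent_elem R q"
      and eq: "e \<otimes> q = q \<otimes> e" and a_eq: "a = q \<ominus> e" by blast
    have ec: "e \<in> carrier R" and qc: "q \<in> carrier R"
      using e q by (auto simp: idempotent_elem_def nilpotent_elem_def)
    have "nilpotent_elem R (\<ominus> q)" using q qc by (simp add: nilpotent_elem_uminus_iff)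
    moreover have "e \<otimes> \<ominus> q = \<ominus> q \<otimes> e" using eq ec qc by (simp add: l_minus r_minus)
    moreover have "\<ominus> a = \<ominus> q \<oplus> e" unfolding a_eq using ec qc by algebra
    ultimately show "strongly_nil_clean R (\<ominus> a)" using e unfolding strongly_nil_clean_def by blast
  next
    assume "strongly_nil_clean R (\<ominus> a)"
    then obtain e q where e: "idempotent_elem R e" and q: "nilpotent_elem R q"
      and eq: "e \<otimes> q = q \<otimes> e" and a_eq: "\<ominus> a = q \<oplus> e"
      unfolding strongly_nil_clean_def by blast
    have ec: "e \<in> carrier R" and qc: "q \<in> carrier R"
      using e q by (auto simp: idempotent_elem_def nilpotent_elem_def)
    have "a = \<ominus> (q \<oplus> e)" using a_eq a by (metis minus_minus)
    then have "a = \<ominus> q \<ominus> e" using ec qc by algebra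
    moreover have "nilpotent_elem R (\<ominus> q)" using q qc by (simp add: nilpotent_elem_uminus_iff)
    moreover have "e \<otimes> \<ominus> q = \<ominus> q \<otimes> e" using eq ec qc by (simp add: l_minus r_minus)
    ultimately show ?minus using e by blast
  qed
  then show ?thesis unfolding strongly_weakly_nil_clean_def strongly_nil_clean_def by blast
qed

lemma strongly_weakly_nil_clean_iff:
  assumes a: "a \<in> carrier R"
  shows "strongly_weakly_nil_clean R a \<longleftrightarrow>
    nilpotent_elem R (a \<ominus> a \<otimes> a) \<or> nilpotent_elem R (a \<oplus> a \<otimes> a)"
proof -
  have "\<ominus> a \<ominus> \<ominus> a \<otimes> \<ominus> a = \<ominus> (a \<oplus> a \<otimes> a)" using a by algebra
  then show ?thesis
    using a by (simp add: strongly_weakly_nil_clean_iff_strongly_nil_clean strongly_nil_clean_iff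
        nilpotent_elem_uminus_iff)
qed

end

section \<open>Surjective ring homomorphisms with nil kernel\<close>

lemma (in monoid) Units_if_mult_Units:
  assumes x: "x \<in> carrier G" and y: "y \<in> carrier G"
    and yx: "y \<otimes> x \<in> Units G" and xy: "x \<otimes> y \<in> Units G"
  shows "x \<in> Units G"
proof -
  define l where "l = inv (y \<otimes> x) \<otimes> y"
  define r where "r = y \<otimes> inv (x \<otimes> y)"
  have lr: "l \<in> carrier G" "r \<in> carrier G" unfolding l_def r_def using yx xy y by auto
  have "l \<otimes> x = \<one>" unfolding l_def using yx x y by (simp add: m_assoc)
  moreover have "x \<otimes> r = \<one>" unfolding r_def using xy x y by (simp flip: m_assoc)
  moreover have "l = r" using calculation lr x by (metis l_one m_assoc r_one)
  ultimately show ?thesis using x lr unfolding Units_def by auto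
qed

locale nil_kernel_surjection = ring_hom_ring +
  assumes surjective: "h ` carrier R = carrier S"
    and nil_kernel: "nil_set R (a_kernel R S h)"
begin

lemma nilpotent_elem_hom_iff:
  assumes x: "x \<in> carrier R" shows "nilpotent_elem S (h x) \<longleftrightarrow> nilpotent_elem R x"
proof
  assume "nilpotent_elem S (h x)"
  then obtain n where "h x [^]\<^bsub>S\<^esub> (n::nat) = \<zero>\<^bsub>S\<^esub>" by (auto simp: nilpotent_elem_def)
  then have "x [^] n \<in> a_kernel R S h" unfolding a_kernel_def' using x hom_nat_pow[OF x, of n] by simp
  then obtain m where "(x [^] n) [^] (m::nat) = \<zero>"
    using nil_kernel unfolding nil_set_def nilpotent_elem_def by blast
  then have "x [^] (n * m) = \<zero>" using R.nat_pow_pow[OF x] by simp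
  then show "nilpotent_elem R x" using x unfolding nilpotent_elem_def by blast
next
  assume "nilpotent_elem R x"
  then obtain n where "x [^] (n::nat) = \<zero>" by (auto simp: nilpotent_elem_def)
  then have "h x [^]\<^bsub>S\<^esub> n = \<zero>\<^bsub>S\<^esub>" using hom_nat_pow[OF x, of n] by simp
  then show "nilpotent_elem S (h x)" using x unfolding nilpotent_elem_def by auto
qed

lemma Units_hom_iff:
  assumes x: "x \<in> carrier R" shows "h x \<in> Units S \<longleftrightarrow> x \<in> Units R"
proof
  assume "h x \<in> Units S"
  then obtain y where y: "y \<in> carrier S" "y \<otimes>\<^bsub>S\<^esub> h x = \<one>\<^bsub>S\<^esub>" "h x \<otimes>\<^bsub>S\<^esub> y = \<one>\<^bsub>S\<^esub>"
    unfolding Units_def by blast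
  obtain b where b: "b \<in> carrier R" "h b = y" using y(1) surjective by (metis imageE)
  have unit: "z \<in> Units R" if z: "z \<in> carrier R" "h z = \<one>\<^bsub>S\<^esub>" for z
  proof -
    have "h (\<one> \<ominus> z) = \<zero>\<^bsub>S\<^esub>" using z by (simp add: R.minus_eq S.r_neg)
    then have "\<one> \<ominus> z \<in> a_kernel R S h" using z unfolding a_kernel_def' by simp
    then have "nilpotent_elem R (\<one> \<ominus> z)" using nil_kernel unfolding nil_set_def by blast
    then have "\<one> \<ominus> (\<one> \<ominus> z) \<in> Units R" by (rule R.one_minus_nilpotent_Units)
    moreover have "\<one> \<ominus> (\<one> \<ominus> z) = z" using z by (simp add: R.minus_eq R.minus_add R.r_neg2)
    ultimately show ?thesis by metis
  qed
  have "b \<otimes> x \<in> Units R" "x \<otimes> b \<in> Units R"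
    using unit b x y by simp_all
  then show "x \<in> Units R" using R.Units_if_mult_Units[OF x b(1)] by blast
next
  assume "x \<in> Units R"
  then obtain y where y: "y \<in> carrier R" "y \<otimes> x = \<one>" "x \<otimes> y = \<one>" unfolding Units_def by blast
  then have "h y \<otimes>\<^bsub>S\<^esub> h x = \<one>\<^bsub>S\<^esub>" "h x \<otimes>\<^bsub>S\<^esub> h y = \<one>\<^bsub>S\<^esub>"
    using x by (metis hom_mult hom_one)+
  then show "h x \<in> Units S" using hom_closed[OF x] hom_closed[OF y(1)] unfolding Units_def by blast
qed

lemma strongly_weakly_nil_clean_hom_iff:
  assumes x: "x \<in> carrier R"
  shows "strongly_weakly_nil_clean S (h x) \<longleftrightarrow> strongly_weakly_nil_clean R x"
proof -
  have "h (x \<ominus> x \<otimes> x) = h x \<ominus>\<^bsub>S\<^esub> h x \<otimes>\<^bsub>S\<^esub> h x"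
    and "h (x \<oplus> x \<otimes> x) = h x \<oplus>\<^bsub>S\<^esub> h x \<otimes>\<^bsub>S\<^esub> h x"
    using x by (simp_all add: R.minus_eq S.minus_eq)
  then show ?thesis
    using x by (simp add: R.strongly_weakly_nil_clean_iff S.strongly_weakly_nil_clean_iff
        flip: nilpotent_elem_hom_iff)
qed

lemma GSWNC_iff: "GSWNC S \<longleftrightarrow> GSWNC R"
  unfolding GSWNC_def
proof (intro iffI ballI)
  fix x assume GSWNC_S: "\<forall>y \<in> carrier S - Units S. strongly_weakly_nil_clean S y"
    and x: "x \<in> carrier R - Units R"
  then have "h x \<in> carrier S - Units S" by (simp add: Units_hom_iff)
  then show "strongly_weakly_nil_clean R x"
    using GSWNC_S x strongly_weakly_nil_clean_hom_iff by blast
next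
  fix y assume GSWNC_R: "\<forall>x \<in> carrier R - Units R. strongly_weakly_nil_clean R x"
    and y: "y \<in> carrier S - Units S"
  then obtain x where "x \<in> carrier R" "y = h x" using surjective by (metis DiffD1 imageE)
  then show "strongly_weakly_nil_clean S y"
    using GSWNC_R y strongly_weakly_nil_clean_hom_iff Units_hom_iff by blast
qed

end

lemma (in ring) GSWNC_Quot_iff:
  assumes "nil_ideal I R" shows "GSWNC (R Quot I) \<longleftrightarrow> GSWNC R"
proof -
  interpret ideal I R using assms by (simp add: nil_ideal_def)
  have "nil_kernel_surjection R (R Quot I) ((+>) I)"
  proof (intro nil_kernel_surjection.intro nil_kernel_surjection_axioms.intro)
    show "ring_hom_ring R (R Quot I) ((+>) I)" by (rule rcos_ring_hom_ring)
    show "(+>) I ` carrier R = carrier (R Quot I)"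
      by (auto simp: FactRing_def A_RCOSETS_def')
    have "a_kernel R (R Quot I) ((+>) I) \<subseteq> I"
      by (auto simp: a_kernel_def' FactRing_def intro: a_rcos_self)
    then show "nil_set R (a_kernel R (R Quot I) ((+>) I))"
      using assms by (auto simp: nil_ideal_def nil_set_def)
  qed
  then show ?thesis by (rule nil_kernel_surjection.GSWNC_iff)
qed

section \<open>The Jacobson radical\<close>

context ring begin

lemma left_idealI:
  assumes "L \<subseteq> carrier R" "\<zero> \<in> L" "\<And>x y. x \<in> L \<Longrightarrow> y \<in> L \<Longrightarrow> x \<oplus> y \<in> L"
    "\<And>x. x \<in> L \<Longrightarrow> \<ominus> x \<in> L" "\<And>r x. r \<in> carrier R \<Longrightarrow> x \<in> L \<Longrightarrow> r \<otimes> x \<in> L"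
  shows "left_ideal L R"
  unfolding left_ideal_def using assms by (auto intro!: additive_subgroupI add.subgroupI)

lemma left_idealD:
  assumes "left_ideal L R"
  shows "L \<subseteq> carrier R" "\<zero> \<in> L" "\<And>x y. x \<in> L \<Longrightarrow> y \<in> L \<Longrightarrow> x \<oplus> y \<in> L"
    "\<And>x. x \<in> L \<Longrightarrow> \<ominus> x \<in> L" "\<And>r x. r \<in> carrier R \<Longrightarrow> x \<in> L \<Longrightarrow> r \<otimes> x \<in> L"
  using assms unfolding left_ideal_def
  by (auto simp: additive_subgroup.a_subset additive_subgroup.zero_closed
      additive_subgroup.a_closed additive_subgroup.a_inv_closed)

lemma left_ideal_eq_carrier:
  assumes "left_ideal L R" "\<one> \<in> L" shows "L = carrier R"
  using left_idealD[OF assms(1)] assms(2) by (metis r_one subsetI subset_antisym)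

lemma left_ideal_zero: "left_ideal {\<zero>} R"
  by (rule left_idealI) auto

lemma left_ideal_add_principal:
  assumes M: "left_ideal M R" and x: "x \<in> carrier R"
  shows "left_ideal {m \<oplus> r \<otimes> x | m r. m \<in> M \<and> r \<in> carrier R} R"
proof (rule left_idealI)
  note M = left_idealD[OF M]
  let ?L = "{m \<oplus> r \<otimes> x | m r. m \<in> M \<and> r \<in> carrier R}"
  show "?L \<subseteq> carrier R" using M(1) x by auto
  have "\<zero> = \<zero> \<oplus> \<zero> \<otimes> x" using x by simp
  then show "\<zero> \<in> ?L" using M(2) by blast
  show "a \<oplus> b \<in> ?L" if ab: "a \<in> ?L" "b \<in> ?L" for a b
  proof -
    obtain m r m' r' where mr: "a = m \<oplus> r \<otimes> x" "b = m' \<oplus> r' \<otimes> x" "m \<in> M" "m' \<in> M"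
      "r \<in> carrier R" "r' \<in> carrier R" using ab by blast
    moreover have "m \<in> carrier R" "m' \<in> carrier R" using mr M(1) by auto
    ultimately have "a \<oplus> b = (m \<oplus> m') \<oplus> (r \<oplus> r') \<otimes> x"
      using x by (simp add: l_distr a_ac)
    then show ?thesis using mr M(3) by blast
  qed
  show "\<ominus> a \<in> ?L" if a: "a \<in> ?L" for a
  proof -
    obtain m r where mr: "a = m \<oplus> r \<otimes> x" "m \<in> M" "r \<in> carrier R" using a by blast
    then have "\<ominus> a = \<ominus> m \<oplus> (\<ominus> r) \<otimes> x" using M(1) x by (auto simp: l_minus minus_add)
    then show ?thesis using mr M(4) by blast
  qed
  show "t \<otimes> a \<in> ?L" if t: "t \<in> carrier R" and a: "a \<in> ?L" for t a
  proof -
    obtain m r where mr: "a = m \<oplus> r \<otimes> x" "m \<in> M" "r \<in> carrier R" using a by blast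
    then have "t \<otimes> a = t \<otimes> m \<oplus> (t \<otimes> r) \<otimes> x" using M(1) x t by (auto simp: r_distr m_assoc)
    then show ?thesis using mr M(5) t by blast
  qed
qed

lemma left_ideal_Union_chain:
  assumes "C \<noteq> {}" "subset.chain {L. left_ideal L R} C"
  shows "left_ideal (\<Union>C) R"
proof (rule left_idealI)
  have L: "\<And>L. L \<in> C \<Longrightarrow> left_ideal L R"
    and cmp: "\<And>K L. K \<in> C \<Longrightarrow> L \<in> C \<Longrightarrow> K \<subseteq> L \<or> L \<subseteq> K"
    using assms(2) unfolding subset_chain_def by auto
  show "\<Union>C \<subseteq> carrier R" using left_idealD(1)[OF L] by blast
  show "\<zero> \<in> \<Union>C" using left_idealD(2)[OF L] assms(1) by blast
  show "\<And>x. x \<in> \<Union>C \<Longrightarrow> \<ominus> x \<in> \<Union>C" using left_idealD(4)[OF L] by blast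
  show "\<And>r x. r \<in> carrier R \<Longrightarrow> x \<in> \<Union>C \<Longrightarrow> r \<otimes> x \<in> \<Union>C" using left_idealD(5)[OF L] by blast
  fix x y assume "x \<in> \<Union>C" "y \<in> \<Union>C"
  then obtain K L where "K \<in> C" "L \<in> C" "x \<in> K" "y \<in> L" by blast
  then show "x \<oplus> y \<in> \<Union>C" using cmp[of K L] left_idealD(3)[OF L] by blast
qed

lemma exists_maximal_left_ideal:
  assumes L: "left_ideal L R" and one: "\<one> \<notin> L"
  shows "\<exists>M. maximal_left_ideal M R \<and> L \<subseteq> M"
proof -
  define \<A> where "\<A> = {K. left_ideal K R \<and> L \<subseteq> K \<and> \<one> \<notin> K}"
  have "\<exists>M\<in>\<A>. \<forall>K\<in>\<A>. M \<subseteq> K \<longrightarrow> K = M"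
  proof (rule subset_Zorn_nonempty)
    show "\<A> \<noteq> {}" using L one unfolding \<A>_def by blast
    fix C assume C: "C \<noteq> {}" "subset.chain \<A> C"
    then have CA: "C \<subseteq> \<A>" by (simp add: subset_chain_def)
    have "subset.chain {K. left_ideal K R} C"
      using C(2) CA unfolding subset_chain_def \<A>_def by auto
    then have "left_ideal (\<Union>C) R" using C(1) left_ideal_Union_chain by blast
    moreover have "L \<subseteq> \<Union>C" "\<one> \<notin> \<Union>C" using C(1) CA unfolding \<A>_def by auto
    ultimately show "\<Union>C \<in> \<A>" unfolding \<A>_def by simp
  qed
  then obtain M where M: "M \<in> \<A>" and max: "\<And>K. K \<in> \<A> \<Longrightarrow> M \<subseteq> K \<Longrightarrow> K = M" by blast
  have "maximal_left_ideal M R"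
    unfolding maximal_left_ideal_def
  proof (intro conjI allI impI)
    show "left_ideal M R" "M \<noteq> carrier R" using M unfolding \<A>_def by auto
    fix K assume K: "left_ideal K R" "M \<subseteq> K"
    show "K = M \<or> K = carrier R"
    proof (cases "\<one> \<in> K")
      case True
      then show ?thesis using left_ideal_eq_carrier[OF K(1)] by simp
    next
      case False
      then have "K \<in> \<A>" using K M unfolding \<A>_def by auto
      then show ?thesis using max K(2) by simp
    qed
  qed
  then show ?thesis using M unfolding \<A>_def by blast
qed

lemma jacobson_radical_subset: "jacobson_radical R \<subseteq> carrier R"
  unfolding jacobson_radical_def by blast

lemma jacobson_radical_mult_left:
  "x \<in> jacobson_radical R \<Longrightarrow> r \<in> carrier R \<Longrightarrow> r \<otimes> x \<in> jacobson_radical R"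
  unfolding jacobson_radical_def maximal_left_ideal_def using left_idealD(5) by auto

lemma jacobson_radical_left_invertible:
  assumes y: "y \<in> jacobson_radical R"
  shows "\<exists>u \<in> carrier R. u \<otimes> (\<one> \<oplus> y) = \<one>"
proof (rule ccontr)
  assume no_inverse: "\<not> ?thesis"
  have yc: "y \<in> carrier R" using y jacobson_radical_subset by blast
  define L where "L = {m \<oplus> r \<otimes> (\<one> \<oplus> y) | m r. m \<in> {\<zero>} \<and> r \<in> carrier R}"
  have "left_ideal L R"
    unfolding L_def using yc by (intro left_ideal_add_principal left_ideal_zero) simp
  moreover have "\<one> \<notin> L" using no_inverse yc unfolding L_def by auto
  ultimately obtain M where M: "maximal_left_ideal M R" and LM: "L \<subseteq> M"
    using exists_maximal_left_ideal by blast
  have M_ideal: "left_ideal M R" using M by (simp add: maximal_left_ideal_def)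
  have "\<one> \<oplus> y = \<zero> \<oplus> \<one> \<otimes> (\<one> \<oplus> y)" using yc by simp
  then have "\<one> \<oplus> y \<in> M" using LM unfolding L_def by blast
  moreover have "y \<in> M" using y M unfolding jacobson_radical_def by blast
  ultimately have "(\<one> \<oplus> y) \<oplus> \<ominus> y \<in> M" using left_idealD(3,4)[OF M_ideal] by blast
  moreover have "(\<one> \<oplus> y) \<oplus> \<ominus> y = \<one>" using yc by (simp add: a_assoc r_neg)
  ultimately have "M = carrier R" using left_ideal_eq_carrier[OF M_ideal] by simp
  then show False using M by (simp add: maximal_left_ideal_def)
qed

lemma jacobson_radicalI:
  assumes x: "x \<in> carrier R"
    and inv: "\<And>r. r \<in> carrier R \<Longrightarrow> \<exists>u \<in> carrier R. u \<otimes> (\<one> \<oplus> r \<otimes> x) = \<one>"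
  shows "x \<in> jacobson_radical R"
  unfolding jacobson_radical_def
proof (intro CollectI conjI allI impI x)
  fix M assume M: "maximal_left_ideal M R"
  then have M_ideal: "left_ideal M R" by (simp add: maximal_left_ideal_def)
  note D = left_idealD[OF M_ideal]
  show "x \<in> M"
  proof (rule ccontr)
    assume xM: "x \<notin> M"
    define L where "L = {m \<oplus> r \<otimes> x | m r. m \<in> M \<and> r \<in> carrier R}"
    have "left_ideal L R" unfolding L_def using M_ideal x by (rule left_ideal_add_principal)
    moreover have "M \<subseteq> L"
    proof
      fix m assume "m \<in> M"
      moreover from this have "m = m \<oplus> \<zero> \<otimes> x" using D(1) x by auto
      ultimately show "m \<in> L" unfolding L_def by blast
    qed
    moreover have "x \<in> L"
    proof -
      have "x = \<zero> \<oplus> \<one> \<otimes> x" using x by simp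
      then show ?thesis unfolding L_def using D(2) by blast
    qed
    ultimately have "L = carrier R" using M xM unfolding maximal_left_ideal_def by blast
    then obtain m r where mr: "\<one> = m \<oplus> r \<otimes> x" "m \<in> M" "r \<in> carrier R"
      unfolding L_def by blast
    then have mc: "m \<in> carrier R" using D(1) by blast
    have "m = \<one> \<oplus> (\<ominus> r) \<otimes> x"
      using mr mc x by (simp add: l_minus a_assoc r_neg flip: minus_equality)
    then obtain u where "u \<in> carrier R" "u \<otimes> m = \<one>" using inv[of "\<ominus> r"] mr(3) by auto
    then have "\<one> \<in> M" using D(5) mr(2) by metis
    then show False using left_ideal_eq_carrier[OF M_ideal] M by (simp add: maximal_left_ideal_def)
  qed
qed

text \<open>If w is a left inverse of 1 + s r x, then 1 - r x w s is a left inverse of 1 + r x s.\<close>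
lemma jacobson_radical_mult_right:
  assumes x: "x \<in> jacobson_radical R" and s: "s \<in> carrier R"
  shows "x \<otimes> s \<in> jacobson_radical R"
proof (rule jacobson_radicalI)
  have xc: "x \<in> carrier R" using x jacobson_radical_subset by blast
  then show "x \<otimes> s \<in> carrier R" using s by simp
  fix r assume r: "r \<in> carrier R"
  define A where "A = r \<otimes> x"
  have A: "A \<in> carrier R" unfolding A_def using r xc by simp
  have "s \<otimes> A \<in> jacobson_radical R"
    unfolding A_def using x r s by (intro jacobson_radical_mult_left)
  then obtain w where w: "w \<in> carrier R" "w \<otimes> (\<one> \<oplus> s \<otimes> A) = \<one>"
    using jacobson_radical_left_invertible by blast
  have "(\<one> \<ominus> A \<otimes> w \<otimes> s) \<otimes> (\<one> \<oplus> A \<otimes> s)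
      = \<one> \<oplus> A \<otimes> s \<ominus> A \<otimes> (w \<otimes> (\<one> \<oplus> s \<otimes> A)) \<otimes> s"
    using A w(1) s by (algebra, simp)
  also have "\<dots> = \<one>" unfolding w(2) using A s by algebra
  finally have "(\<one> \<ominus> A \<otimes> w \<otimes> s) \<otimes> (\<one> \<oplus> r \<otimes> (x \<otimes> s)) = \<one>"
    unfolding A_def using r xc s by (simp add: m_assoc)
  moreover have "\<one> \<ominus> A \<otimes> w \<otimes> s \<in> carrier R" using A w(1) s by simp
  ultimately show "\<exists>u \<in> carrier R. u \<otimes> (\<one> \<oplus> r \<otimes> (x \<otimes> s)) = \<one>" by blast
qed

lemma ideal_jacobson_radical: "ideal (jacobson_radical R) R"
proof (rule idealI)
  show "ring R" by (rule ring_axioms)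
  show "subgroup (jacobson_radical R) (add_monoid R)"
  proof (rule add.subgroupI)
    show "jacobson_radical R \<subseteq> carrier R" by (rule jacobson_radical_subset)
    have "\<zero> \<in> jacobson_radical R"
      unfolding jacobson_radical_def maximal_left_ideal_def using left_idealD(2) by auto
    then show "jacobson_radical R \<noteq> {}" by blast
    show "\<ominus> a \<in> jacobson_radical R" if "a \<in> jacobson_radical R" for a
      using that unfolding jacobson_radical_def maximal_left_ideal_def using left_idealD(4) by auto
    show "a \<oplus> b \<in> jacobson_radical R" if "a \<in> jacobson_radical R" "b \<in> jacobson_radical R" for a b
      using that unfolding jacobson_radical_def maximal_left_ideal_def using left_idealD(3) by auto
  qed
  show "x \<otimes> a \<in> jacobson_radical R" "a \<otimes> x \<in> jacobson_radical R"
    if "a \<in> jacobson_radical R" "x \<in> carrier R" for a x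
    using that by (simp_all add: jacobson_radical_mult_left jacobson_radical_mult_right)
qed

lemma one_eq_zero_if_Units_jacobson_radical:
  assumes x: "x \<in> jacobson_radical R" and unit: "x \<in> Units R"
  shows "\<one> = \<zero>"
proof -
  have "(\<ominus> (inv x)) \<otimes> x \<in> jacobson_radical R" using x unit by (simp add: jacobson_radical_mult_left)
  moreover have "(\<ominus> (inv x)) \<otimes> x = \<ominus> \<one>" using unit by (simp add: l_minus Units_closed)
  ultimately obtain u where "u \<in> carrier R" "u \<otimes> (\<one> \<oplus> \<ominus> \<one>) = \<one>"
    using jacobson_radical_left_invertible by metis
  then show ?thesis by (simp add: r_neg)
qed

lemma nilpotent_elem_if_jacobson_radical_factor:
  assumes x: "x \<in> carrier R" and y: "y \<in> jacobson_radical R" "y \<otimes> x = x \<otimes> y"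
    and nil: "nilpotent_elem R ((\<one> \<oplus> y) \<otimes> x)"
  shows "nilpotent_elem R x"
proof -
  have yc: "y \<in> carrier R" using y(1) jacobson_radical_subset by blast
  obtain u where "u \<in> carrier R" "u \<otimes> (\<one> \<oplus> y) = \<one>"
    using jacobson_radical_left_invertible[OF y(1)] by blast
  moreover have "(\<one> \<oplus> y) \<otimes> x = x \<otimes> (\<one> \<oplus> y)" using x yc y(2) by (simp add: l_distr r_distr)
  ultimately show ?thesis using nilpotent_elem_if_left_invertible_factor[OF x _ _ _ _ nil] yc by blast
qed

lemma nil_set_jacobson_radical_if_GSWNC:
  assumes GSWNC: "GSWNC R" shows "nil_set R (jacobson_radical R)"
  unfolding nil_set_def
proof
  fix x assume x: "x \<in> jacobson_radical R"
  have xc: "x \<in> carrier R" using x jacobson_radical_subset by blast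
  show "nilpotent_elem R x"
  proof (cases "x \<in> Units R")
    case True
    then have "x = \<zero>" using one_eq_zero_if_Units_jacobson_radical[OF x] xc by (metis r_one r_null)
    then have "x [^] (1::nat) = \<zero>" by simp
    then show ?thesis using xc unfolding nilpotent_elem_def by blast
  next
    case False
    then have "strongly_weakly_nil_clean R x" using GSWNC xc by (simp add: GSWNC_def)
    then consider "nilpotent_elem R (x \<ominus> x \<otimes> x)" | "nilpotent_elem R (x \<oplus> x \<otimes> x)"
      using xc by (auto simp: strongly_weakly_nil_clean_iff)
    then show ?thesis
    proof cases
      case 1
      moreover have "(\<one> \<oplus> \<ominus> x) \<otimes> x = x \<ominus> x \<otimes> x" using xc by (simp add: l_distr l_minus minus_eq)
      moreover have "\<ominus> x \<otimes> x = x \<otimes> \<ominus> x" using xc by (simp add: l_minus r_minus)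
      moreover have "\<ominus> x \<in> jacobson_radical R"
        using x by (simp add: additive_subgroup.a_inv_closed ideal.axioms(1) ideal_jacobson_radical)
      ultimately show ?thesis using nilpotent_elem_if_jacobson_radical_factor[OF xc] by metis
    next
      case 2
      moreover have "(\<one> \<oplus> x) \<otimes> x = x \<oplus> x \<otimes> x" using xc by (simp add: l_distr)
      ultimately show ?thesis using nilpotent_elem_if_jacobson_radical_factor[OF xc x] by simp
    qed
  qed
qed

end

theorem proposition2p13:
  fixes R :: "('a, 'b) ring_scheme"
  assumes "ring R"
  shows "(\<forall>I. nil_ideal I R \<longrightarrow> (GSWNC R \<longleftrightarrow> GSWNC (R Quot I)))
       \<and> (GSWNC R \<longleftrightarrow>
            nil_set R (jacobson_radical R) \<and> GSWNC (R Quot (jacobson_radical R)))"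
proof -
  interpret ring R by fact
  have quotient: "GSWNC R \<longleftrightarrow> GSWNC (R Quot I)" if "nil_ideal I R" for I
    using GSWNC_Quot_iff[OF that] by simp
  have "nil_ideal (jacobson_radical R) R \<longleftrightarrow> nil_set R (jacobson_radical R)"
    using ideal_jacobson_radical by (simp add: nil_ideal_def)
  then show ?thesis
    using quotient nil_set_jacobson_radical_if_GSWNC by blast
qed

end
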